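(* For all integers $0\le t\le n$, there exists a $2$-CNF formula $F$ on $n$ variables that is acyclic, $t$-admissible, and satisfies $|\mathrm{sat}_t(F)|=S(n,t,2)$.
   Context: A $2$-CNF formula over $x_1,\dots,x_n$ is a conjunction of clauses each containing at most two literals. The implication graph $G(F)$ of a $2$-CNF $F$ is the directed graph on the $2n$ literals $x_1,\dots,x_n,\neg x_1,\dots,\neg x_n$ which, for each clause $X\lor Y$ ($X,Y$ literals), contains the edges $\neg X\to Y$ and $\neg Y\to X$ (a unit clause $X$ is treated as $X\lor X$). $F$ is acyclic if $G(F)$ has no directed cycle. $\mathrm{sat}_t(F)$ is the set of satisfying assignments of Hamming weight exactly $t$; $F$ is $t$-admissible if it has no satisfying assignment of Hamming weight less than $t$; $S(n,t,k)$ is the maximum of $|\mathrm{sat}_t(F)|$ over $t$-admissible $k$-CNF formulas $F$ on $n$ variables. *)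

theory Defs
  imports Main
begin

text \<open>Variables are x_0,...,x_(n-1), represented by natural numbers i < n.
A literal is a pair (i, b): (i, True) is x_i and (i, False) is its negation.
An assignment is the set of variables set to true; its Hamming weight is its cardinality.\<close>

type_synonym lit = "nat \<times> bool"
type_synonym clause = "lit set"
type_synonym cnf = "clause set"

definition neg_lit :: "lit \<Rightarrow> lit" where
  "neg_lit l = (fst l, \<not> snd l)"

definition lit_true :: "nat set \<Rightarrow> lit \<Rightarrow> bool" where
  "lit_true A l \<longleftrightarrow> ((fst l \<in> A) = snd l)"

definition satisfies :: "nat set \<Rightarrow> cnf \<Rightarrow> bool" where
  "satisfies A F \<longleftrightarrow> (\<forall>C\<in>F. \<exists>l\<in>C. lit_true A l)"

definition is_kcnf :: "nat \<Rightarrow> nat \<Rightarrow> cnf \<Rightarrow> bool" where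
  "is_kcnf n k F \<longleftrightarrow> finite F \<and>
     (\<forall>C\<in>F. finite C \<and> card C \<le> k \<and> (\<forall>l\<in>C. fst l < n))"

definition sat_t :: "nat \<Rightarrow> nat \<Rightarrow> cnf \<Rightarrow> nat set set" where
  "sat_t n t F = {A. A \<subseteq> {..<n} \<and> card A = t \<and> satisfies A F}"

definition t_admissible :: "nat \<Rightarrow> nat \<Rightarrow> cnf \<Rightarrow> bool" where
  "t_admissible n t F \<longleftrightarrow> (\<forall>A. A \<subseteq> {..<n} \<and> card A < t \<longrightarrow> \<not> satisfies A F)"

definition S :: "nat \<Rightarrow> nat \<Rightarrow> nat \<Rightarrow> nat" where
  "S n t k = Max {card (sat_t n t F) | F. is_kcnf n k F \<and> t_admissible n t F}"

text \<open>Implication graph: clause X \<or> Y gives edges \<not>X \<rightarrow> Y and \<not>Y \<rightarrow> X;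
a unit clause X is treated as X \<or> X, giving \<not>X \<rightarrow> X.\<close>
definition impl_graph :: "cnf \<Rightarrow> (lit \<times> lit) set" where
  "impl_graph F = {(neg_lit X, Y) | X Y C. C \<in> F \<and> X \<in> C \<and> Y \<in> C \<and> (X \<noteq> Y \<or> card C = 1)}"

definition acyclic_cnf :: "cnf \<Rightarrow> bool" where
  "acyclic_cnf F \<longleftrightarrow> acyclic (impl_graph F)"

end

theory Submission
  imports Defs
begin

text \<open>Take a 2-CNF F attaining S(n,t,2) and replace it by the monotone 2-CNF G whose clauses
are the pairs x_u \<or> x_w that every solution of F meets. Every solution of F satisfies G, so G has
at least as many weight-t solutions, and G is acyclic because all its implication edges go from a
negative to a positive literal. G stays t-admissible because the solutions of a 2-CNF are closed
under the bitwise majority of three assignments, which yields a Helly property: if every pair of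
variables outside a set A is avoided by some solution of F, then some solution of F lies inside A.\<close>

definition majority :: "'a set \<Rightarrow> 'a set \<Rightarrow> 'a set \<Rightarrow> 'a set" where
  "majority B1 B2 B3 = (B1 \<inter> B2) \<union> (B1 \<inter> B3) \<union> (B2 \<inter> B3)"

lemma satisfies_majority:
  assumes two: "\<forall>C\<in>F. finite C \<and> card C \<le> 2"
    and sat: "satisfies B1 F" "satisfies B2 F" "satisfies B3 F"
  shows "satisfies (majority B1 B2 B3) F"
  unfolding satisfies_def
proof
  fix C assume C: "C \<in> F"
  obtain l1 l2 l3 where l: "{l1, l2, l3} \<subseteq> C"
    and true: "lit_true B1 l1" "lit_true B2 l2" "lit_true B3 l3"
    using sat C unfolding satisfies_def by (metis empty_subsetI insert_subset)
  have "card {l1, l2, l3} \<le> 2"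
    using two C l by (meson card_mono order_trans)
  then have "l1 = l2 \<or> l1 = l3 \<or> l2 = l3"
    by (auto simp: card_insert_if split: if_splits)
  then have "lit_true (majority B1 B2 B3) l1 \<or> lit_true (majority B1 B2 B3) l2"
    using true unfolding lit_true_def majority_def by (cases l1; cases l2) auto
  then show "\<exists>l\<in>C. lit_true (majority B1 B2 B3) l" using l by blast
qed

lemma card_le_2_obtain_pair:
  assumes "finite I" "I \<noteq> {}" "card I \<le> 2"
  obtains u w where "I = {u, w}"
proof -
  have "card I = 1 \<or> card I = 2" using assms by (cases "card I") auto
  then show thesis using that by (auto simp: card_1_singleton_iff card_2_iff)
qed

lemma card_gt_2_obtain_triple:
  assumes "2 < card I"
  obtains u1 u2 u3 where "{u1, u2, u3} \<subseteq> I" "u1 \<noteq> u2" "u1 \<noteq> u3" "u2 \<noteq> u3"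
proof -
  obtain J where "J \<subseteq> I" "card J = 3"
    using assms obtain_subset_with_card_n[of 3 I] by force
  then show thesis using that by (auto simp: card_3_iff)
qed

text \<open>Helly property of majority-closed families: three solutions each avoiding all but one of
three distinct points of I combine by majority into a solution avoiding all of I.\<close>

lemma majority_closed_Helly:
  assumes closed: "\<And>B1 B2 B3. B1 \<in> \<B> \<Longrightarrow> B2 \<in> \<B> \<Longrightarrow> B3 \<in> \<B> \<Longrightarrow> majority B1 B2 B3 \<in> \<B>"
  shows "finite I \<Longrightarrow> I \<noteq> {} \<Longrightarrow> \<forall>u\<in>I. \<forall>w\<in>I. \<exists>B\<in>\<B>. u \<notin> B \<and> w \<notin> B
    \<Longrightarrow> \<exists>B\<in>\<B>. B \<inter> I = {}"
proof (induction "card I" arbitrary: I rule: less_induct)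
  case less
  show ?case
  proof (cases "card I \<le> 2")
    case True
    then obtain u w where "I = {u, w}"
      using less.prems(1,2) card_le_2_obtain_pair by blast
    then show ?thesis using less.prems(3) by blast
  next
    case False
    then obtain u1 u2 u3 where u: "{u1, u2, u3} \<subseteq> I" "u1 \<noteq> u2" "u1 \<noteq> u3" "u2 \<noteq> u3"
      using card_gt_2_obtain_triple by (metis not_le)
    have avoid_all_but: "\<exists>B\<in>\<B>. B \<inter> (I - {x}) = {}" if "x \<in> I" for x
    proof (rule less.hyps)
      show "card (I - {x}) < card I" using that less.prems(1) by (meson card_Diff1_less)
      show "I - {x} \<noteq> {}" using u that by blast
    qed (use less.prems in auto)
    obtain B1 B2 B3 where "B1 \<in> \<B>" "B2 \<in> \<B>" "B3 \<in> \<B>"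
      "B1 \<inter> (I - {u1}) = {}" "B2 \<inter> (I - {u2}) = {}" "B3 \<inter> (I - {u3}) = {}"
      using avoid_all_but u(1) by (metis insert_subset)
    then have "majority B1 B2 B3 \<in> \<B>" "majority B1 B2 B3 \<inter> I = {}"
      using closed u unfolding majority_def by blast+
    then show ?thesis by blast
  qed
qed

definition solutions :: "nat \<Rightarrow> cnf \<Rightarrow> nat set set" where
  "solutions n F = {B. B \<subseteq> {..<n} \<and> satisfies B F}"

lemma solutions_Helly:
  assumes "is_kcnf n 2 F" "finite I" "I \<noteq> {}"
    and "\<forall>u\<in>I. \<forall>w\<in>I. \<exists>B\<in>solutions n F. u \<notin> B \<and> w \<notin> B"
  shows "\<exists>B\<in>solutions n F. B \<inter> I = {}"
proof (rule majority_closed_Helly[OF _ assms(2-4)])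
  fix B1 B2 B3 assume "B1 \<in> solutions n F" "B2 \<in> solutions n F" "B3 \<in> solutions n F"
  then show "majority B1 B2 B3 \<in> solutions n F"
    using assms(1) satisfies_majority[of F B1 B2 B3]
    unfolding solutions_def is_kcnf_def majority_def by auto
qed

definition positive_closure :: "nat \<Rightarrow> cnf \<Rightarrow> cnf" where
  "positive_closure n F = {{(u, True), (w, True)} | u w. u < n \<and> w < n \<and>
     (\<forall>B\<in>solutions n F. u \<in> B \<or> w \<in> B)}"

lemma positive_closure_is_2cnf: "is_kcnf n 2 (positive_closure n F)"
proof -
  have "positive_closure n F \<subseteq> (\<lambda>(u, w). {(u, True), (w, True)}) ` ({..<n} \<times> {..<n})"
    unfolding positive_closure_def by auto
  then have "finite (positive_closure n F)" by (rule finite_subset) auto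
  moreover have "card {(u, True), (w, True)} \<le> 2" for u w :: nat
    by (simp add: card_insert_if)
  ultimately show ?thesis
    unfolding is_kcnf_def positive_closure_def by fastforce
qed

lemma acyclic_cnf_if_positive:
  assumes "\<forall>C\<in>F. \<forall>l\<in>C. snd l"
  shows "acyclic_cnf F"
proof -
  have edge: "\<not> snd a \<and> snd b" if ab: "(a, b) \<in> impl_graph F" for a b
  proof -
    obtain X C where "a = neg_lit X" "C \<in> F" "X \<in> C" "b \<in> C"
      using ab unfolding impl_graph_def by blast
    then show ?thesis using assms by (simp add: neg_lit_def)
  qed
  have "\<not> snd a \<and> snd b" if "(a, b) \<in> (impl_graph F)\<^sup>+" for a b
    using that by (induction rule: trancl_induct) (auto dest: edge)
  then show ?thesis unfolding acyclic_cnf_def acyclic_def by fastforce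
qed

lemma satisfies_positive_closure_iff:
  "satisfies A (positive_closure n F) \<longleftrightarrow>
     (\<forall>u<n. \<forall>w<n. (\<forall>B\<in>solutions n F. u \<in> B \<or> w \<in> B) \<longrightarrow> u \<in> A \<or> w \<in> A)"
proof
  assume sat: "satisfies A (positive_closure n F)"
  show "\<forall>u<n. \<forall>w<n. (\<forall>B\<in>solutions n F. u \<in> B \<or> w \<in> B) \<longrightarrow> u \<in> A \<or> w \<in> A"
  proof (intro allI impI)
    fix u w assume "u < n" "w < n" "\<forall>B\<in>solutions n F. u \<in> B \<or> w \<in> B"
    then have "{(u, True), (w, True)} \<in> positive_closure n F"
      unfolding positive_closure_def by blast
    then show "u \<in> A \<or> w \<in> A" using sat unfolding satisfies_def lit_true_def by auto
  qed
qed (auto simp: satisfies_def positive_closure_def lit_true_def)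

lemma solutions_satisfy_positive_closure:
  assumes "B \<in> solutions n F"
  shows "satisfies B (positive_closure n F)"
  unfolding satisfies_positive_closure_iff using assms by blast

lemma sat_t_subset_positive_closure: "sat_t n t F \<subseteq> sat_t n t (positive_closure n F)"
  using solutions_satisfy_positive_closure unfolding sat_t_def solutions_def by blast

lemma t_admissible_positive_closure:
  assumes F: "is_kcnf n 2 F" "t_admissible n t F" and "t \<le> n"
  shows "t_admissible n t (positive_closure n F)"
  unfolding t_admissible_def
proof (intro allI impI notI)
  fix A assume A: "A \<subseteq> {..<n} \<and> card A < t" and sat: "satisfies A (positive_closure n F)"
  let ?I = "{..<n} - A"
  have "card A < card {..<n}" using A \<open>t \<le> n\<close> by simp
  then have "?I \<noteq> {}" using A by auto
  moreover have "\<forall>u\<in>?I. \<forall>w\<in>?I. \<exists>B\<in>solutions n F. u \<notin> B \<and> w \<notin> B"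
    using sat unfolding satisfies_positive_closure_iff by blast
  ultimately obtain B where B: "B \<in> solutions n F" "B \<inter> ?I = {}"
    using solutions_Helly[OF F(1)] by blast
  then have "B \<subseteq> A" unfolding solutions_def by blast
  then have "card B < t"
    using A card_mono[of A B] finite_subset[of A "{..<n}"] by simp
  then show False using F(2) B unfolding t_admissible_def solutions_def by blast
qed

lemma finite_sat_t: "finite (sat_t n t F)"
  by (rule finite_subset[of _ "Pow {..<n}"]) (auto simp: sat_t_def)

lemma card_sat_t_le: "card (sat_t n t F) \<le> 2 ^ n"
proof -
  have "card (sat_t n t F) \<le> card (Pow {..<n})"
    by (rule card_mono) (auto simp: sat_t_def)
  then show ?thesis by (simp add: card_Pow)
qed

lemma finite_S_values: "finite {card (sat_t n t F) | F. is_kcnf n k F \<and> t_admissible n t F}"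
  by (rule finite_subset[of _ "{..2 ^ n}"]) (auto simp: card_sat_t_le)

lemma card_sat_t_le_S:
  assumes "is_kcnf n k F" "t_admissible n t F"
  shows "card (sat_t n t F) \<le> S n t k"
  unfolding S_def using assms finite_S_values by (intro Max_ge) auto

lemma S_attained: "\<exists>F. is_kcnf n k F \<and> t_admissible n t F \<and> card (sat_t n t F) = S n t k"
proof -
  have "is_kcnf n k {{}} \<and> t_admissible n t {{}}"
    unfolding is_kcnf_def t_admissible_def satisfies_def by auto
  then have "S n t k \<in> {card (sat_t n t F) | F. is_kcnf n k F \<and> t_admissible n t F}"
    unfolding S_def using finite_S_values by (intro Max_in) blast+
  then show ?thesis by auto
qed

theorem mainTheorem9:
  fixes n t :: nat
  assumes "t \<le> n"
  shows "\<exists>F. is_kcnf n 2 F \<and> acyclic_cnf F \<and> t_admissible n t F \<and>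
             card (sat_t n t F) = S n t 2"
proof -
  obtain F where F: "is_kcnf n 2 F" "t_admissible n t F" "card (sat_t n t F) = S n t 2"
    using S_attained by blast
  let ?G = "positive_closure n F"
  have G: "is_kcnf n 2 ?G" "t_admissible n t ?G" "acyclic_cnf ?G"
    using positive_closure_is_2cnf t_admissible_positive_closure[OF F(1,2) assms]
    by (auto intro: acyclic_cnf_if_positive simp: positive_closure_def)
  have "S n t 2 \<le> card (sat_t n t ?G)"
    using F(3) card_mono[OF finite_sat_t sat_t_subset_positive_closure[of n t F]] by simp
  moreover have "card (sat_t n t ?G) \<le> S n t 2"
    using G card_sat_t_le_S by blast
  ultimately show ?thesis using G by (intro exI[of _ ?G]) auto
qed

end
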